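(* Let $H$ be a Hilbert space and $U_{ik}\in B(H)$, $i,k=1,\dots,n$, operators satisfying relations (R1)–(R5). Then for all $i,j,k,l$ with $i\neq j$ and $k\neq l$, $$U_{ik}^*U_{jl}=\omega_{ij}\omega_{lk}U_{jl}U_{ik}^*.$$
   Context: $n\ge2$, $\theta\in M_n(\mathbb R)$ skew-symmetric, $\omega_{ij}=e^{2\pi i\theta_{ij}}$. Relations, for all $i,j,k,l\in\{1,\dots,n\}$: (R1) $U_{ik}U_{jl}+\omega_{ji}U_{jk}U_{il}=\omega_{kl}U_{il}U_{jk}+\omega_{ji}\omega_{kl}U_{jl}U_{ik}$; (R2) $\sum_iU_{ik}U_{il}^*=\delta_{kl}1$; (R3) $\sum_iU_{il}^*U_{ik}=\delta_{kl}1$; (R4) $U_{jk}U_{ik}^*=0$ for $i\neq j$; (R5) $U_{ik}^*U_{jk}=0$ for $i\neq j$. *)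

theory Defs
  imports "HOL-Analysis.Analysis"
begin

text \<open>Completeness comes from
  the class banach.\<close>
definition complex_hilbert :: "(complex \<Rightarrow> 'h::banach \<Rightarrow> 'h) \<Rightarrow> ('h \<Rightarrow> 'h \<Rightarrow> complex) \<Rightarrow> bool" where
  "complex_hilbert sc ip \<longleftrightarrow>
     (\<forall>r x. sc (complex_of_real r) x = r *\<^sub>R x) \<and>
     (\<forall>a b x. sc (a * b) x = sc a (sc b x)) \<and>
     (\<forall>a x y. sc a (x + y) = sc a x + sc a y) \<and>
     (\<forall>a b x. sc (a + b) x = sc a x + sc b x) \<and>
     (\<forall>x y z. ip x (y + z) = ip x y + ip x z) \<and>
     (\<forall>a x y. ip x (sc a y) = a * ip x y) \<and>
     (\<forall>x y. ip y x = cnj (ip x y)) \<and>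
     (\<forall>x. ip x x = complex_of_real ((norm x)\<^sup>2))"

definition bounded_op :: "(complex \<Rightarrow> 'h::banach \<Rightarrow> 'h) \<Rightarrow> ('h \<Rightarrow> 'h) \<Rightarrow> bool" where
  "bounded_op sc T \<longleftrightarrow> bounded_linear T \<and> (\<forall>a x. T (sc a x) = sc a (T x))"

text \<open>The Hilbert space adjoint T* (unique in a Hilbert space).\<close>
definition adj :: "('h \<Rightarrow> 'h \<Rightarrow> complex) \<Rightarrow> ('h \<Rightarrow> 'h) \<Rightarrow> ('h \<Rightarrow> 'h)" where
  "adj ip T = (THE S. \<forall>x y. ip (T x) y = ip x (S y))"

definition omega :: "(nat \<Rightarrow> nat \<Rightarrow> real) \<Rightarrow> nat \<Rightarrow> nat \<Rightarrow> complex" where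
  "omega \<theta> i j = cis (2 * pi * \<theta> i j)"

end

theory Submission
  imports Defs
begin

text \<open>In \<open>U\<^sub>i\<^sub>k\<^sup>* U\<^sub>j\<^sub>l x\<close> insert \<open>\<Sum>\<^sub>m U\<^sub>m\<^sub>k U\<^sub>m\<^sub>k\<^sup>* = 1\<close> in front of \<open>x\<close>, and write
  \<open>U\<^sub>j\<^sub>l U\<^sub>i\<^sub>k\<^sup>* x = \<Sum>\<^sub>m U\<^sub>m\<^sub>k\<^sup>* U\<^sub>m\<^sub>k U\<^sub>j\<^sub>l U\<^sub>i\<^sub>k\<^sup>* x\<close>. By (R4), \<open>U\<^sub>j\<^sub>k\<close> kills the range of
  \<open>U\<^sub>m\<^sub>k\<^sup>*\<close> for \<open>m \<noteq> j\<close>, and on the kernel of \<open>U\<^sub>j\<^sub>k\<close> relation (R1) moves \<open>U\<^sub>j\<^sub>l\<close>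
  past \<open>U\<^sub>m\<^sub>k\<close> at the cost of the twist \<open>\<omega>\<^sub>m\<^sub>j \<omega>\<^sub>l\<^sub>k\<close>, up to a term starting with \<open>U\<^sub>j\<^sub>k\<close>.
  Then (R4) and (R5) kill every summand except \<open>m = i\<close>, and the two surviving terms
  differ exactly by \<open>\<omega>\<^sub>i\<^sub>j \<omega>\<^sub>l\<^sub>k\<close>.

  This is pure algebra once the adjoints are known to be linear. As the Hilbert space
  is given abstractly, that needs the Riesz representation theorem, proved here by
  maximising a functional on the unit sphere: near-maximisers form a Cauchy sequence
  by the parallelogram law.\<close>

lemma linear_le_quadratic_imp_eq_0:
  fixes a K :: real
  assumes "\<And>t. t * a \<le> t\<^sup>2 * K"
  shows "a = 0"
proof (rule ccontr)
  assume "a \<noteq> 0"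
  define c where "c = \<bar>K\<bar> + 1"
  have c: "0 < c" "\<bar>K\<bar> < c" by (simp_all add: c_def)
  have "0 < a\<^sup>2" using \<open>a \<noteq> 0\<close> by simp
  have "(a / c)\<^sup>2 * K \<le> a\<^sup>2 * (\<bar>K\<bar> / c\<^sup>2)"
    by (simp add: power_divide divide_right_mono mult_left_mono)
  also have "\<dots> < a\<^sup>2 * (1 / c)"
    using \<open>0 < a\<^sup>2\<close> c by (intro mult_strict_left_mono) (simp_all add: field_simps power2_eq_square)
  also have "\<dots> = a / c * a" by (simp add: power2_eq_square)
  finally show False using assms[of "a / c"] by simp
qed

lemma bounded_linear_real_near_onorm:
  fixes f :: "'a::real_normed_vector \<Rightarrow> real"
  assumes f: "bounded_linear f" and "0 < \<delta>" "\<delta> < onorm f"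
  obtains x where "norm x = 1" "onorm f - \<delta> < f x"
proof -
  interpret f: bounded_linear f by (fact f)
  have "onorm f - \<delta> < (SUP x. norm (f x) / norm x)"
    using \<open>0 < \<delta>\<close> by (simp add: onorm_def)
  then obtain x where x: "onorm f - \<delta> < \<bar>f x\<bar> / norm x"
    by (auto elim: less_cSupE)
  then have "x \<noteq> 0" "f x \<noteq> 0" using \<open>\<delta> < onorm f\<close> by auto
  define z where "z = (sgn (f x) / norm x) *\<^sub>R x"
  have "norm z = 1" using \<open>x \<noteq> 0\<close> \<open>f x \<noteq> 0\<close> by (simp add: z_def abs_sgn)
  moreover have "f z = \<bar>f x\<bar> / norm x" by (simp add: z_def f.scale abs_real_def sgn_real_def)
  ultimately show thesis using that x by simp
qed

locale hilbert_space =
  fixes sc :: "complex \<Rightarrow> 'h::banach \<Rightarrow> 'h" and ip :: "'h \<Rightarrow> 'h \<Rightarrow> complex"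
  assumes complex_hilbert: "complex_hilbert sc ip"
begin

lemma sc_of_real: "sc (complex_of_real r) x = r *\<^sub>R x"
  and sc_mult: "sc (a * b) x = sc a (sc b x)"
  and sc_add: "sc a (x + y) = sc a x + sc a y"
  and ip_add_right: "ip x (y + z) = ip x y + ip x z"
  and ip_sc_right: "ip x (sc a y) = a * ip x y"
  and ip_commute_cnj: "ip y x = cnj (ip x y)"
  and ip_self: "ip x x = complex_of_real ((norm x)\<^sup>2)"
  using complex_hilbert unfolding complex_hilbert_def by blast+

lemma sc_one: "sc 1 x = x"
  using sc_of_real[of 1 x] by simp

lemma linear_sc: "linear (sc a)"
proof (rule linearI)
  show "sc a (r *\<^sub>R x) = r *\<^sub>R sc a x" for r x
    by (metis sc_mult sc_of_real mult.commute)
qed (rule sc_add)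

lemma ip_add_left: "ip (x + y) z = ip x z + ip y z"
  by (simp add: ip_commute_cnj[of "x + y"] ip_commute_cnj[of x] ip_commute_cnj[of y] ip_add_right)

lemma ip_diff_right: "ip x (y - z) = ip x y - ip x z"
  using ip_add_right[of x z "y - z"] by simp

lemma ip_diff_left: "ip (x - y) z = ip x z - ip y z"
  using ip_add_left[of y "x - y" z] by simp

lemma ip_zero_right: "ip x 0 = 0"
  using ip_diff_right[of x 0 0] by simp

lemma ip_zero_left: "ip 0 x = 0"
  using ip_diff_left[of 0 0 x] by simp

lemma ip_scaleR_right: "ip x (r *\<^sub>R y) = complex_of_real r * ip x y"
  using ip_sc_right[of x "complex_of_real r" y] by (simp add: sc_of_real)

lemma ip_scaleR_left: "ip (r *\<^sub>R x) y = complex_of_real r * ip x y"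
  by (simp add: ip_commute_cnj[of "r *\<^sub>R x"] ip_scaleR_right ip_commute_cnj[of x])

lemma Re_ip_commute: "Re (ip x y) = Re (ip y x)"
  by (simp add: ip_commute_cnj[of y x])

lemma power2_norm_eq_Re_ip: "(norm x)\<^sup>2 = Re (ip x x)"
  by (simp add: ip_self)

lemma power2_norm_add: "(norm (x + y))\<^sup>2 = (norm x)\<^sup>2 + (norm y)\<^sup>2 + 2 * Re (ip x y)"
  unfolding power2_norm_eq_Re_ip by (simp add: ip_add_left ip_add_right Re_ip_commute[of y x])

lemma power2_norm_diff: "(norm (x - y))\<^sup>2 = (norm x)\<^sup>2 + (norm y)\<^sup>2 - 2 * Re (ip x y)"
  unfolding power2_norm_eq_Re_ip by (simp add: ip_diff_left ip_diff_right Re_ip_commute[of y x])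

lemma abs_Re_ip_le: "\<bar>Re (ip x y)\<bar> \<le> norm x * norm y"
proof (cases "y = 0")
  case True
  then show ?thesis by (simp add: ip_zero_right)
next
  case False
  define t where "t = Re (ip x y) / (norm y)\<^sup>2"
  have ny: "norm y > 0" using False by simp
  have "0 \<le> (norm (x - t *\<^sub>R y))\<^sup>2" by simp
  also have "\<dots> = (norm x)\<^sup>2 + t\<^sup>2 * (norm y)\<^sup>2 - 2 * t * Re (ip x y)"
    by (simp add: power2_norm_diff ip_scaleR_right power_mult_distrib)
  also have "\<dots> = (norm x)\<^sup>2 - (Re (ip x y))\<^sup>2 / (norm y)\<^sup>2"
    using ny by (simp add: t_def field_simps power2_eq_square)
  finally have "(Re (ip x y))\<^sup>2 \<le> (norm x * norm y)\<^sup>2"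
    using ny by (simp add: field_simps power_mult_distrib)
  then show ?thesis
    using abs_le_square_iff[of "Re (ip x y)" "norm x * norm y"] by simp
qed

lemma ip_right_cancel:
  assumes "\<And>z. ip z a = ip z b"
  shows "a = b"
proof -
  have "ip (a - b) (a - b) = 0" by (simp add: ip_diff_right assms)
  then show ?thesis by (simp add: ip_self)
qed

lemma near_maximisers_close:
  fixes f :: "'h \<Rightarrow> real"
  assumes f: "bounded_linear f" and bound: "\<And>y. f y \<le> M * norm y" and "0 < M"
    and x: "norm x \<le> 1" "M - M * a \<le> f x" and z: "norm z \<le> 1" "M - M * b \<le> f z"
  shows "(norm (x - z))\<^sup>2 \<le> 4 * (a + b)"
proof -
  interpret f: bounded_linear f by (fact f)
  define s where "s = norm (x + z)"
  have "M * (2 - (a + b)) \<le> M * s"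
    using bound[of "x + z"] x z by (simp add: s_def f.add algebra_simps)
  then have "2 - s \<le> a + b" using \<open>0 < M\<close> by simp
  moreover have "s \<le> 2" using norm_triangle_ineq[of x z] x z by (simp add: s_def)
  moreover have "0 \<le> s" by (simp add: s_def)
  ultimately have "(2 - s) * (2 + s) \<le> (a + b) * 4"
    by (intro mult_mono) auto
  moreover have "(norm (x - z))\<^sup>2 + s\<^sup>2 = 2 * (norm x)\<^sup>2 + 2 * (norm z)\<^sup>2"
    by (simp add: s_def power2_norm_add power2_norm_diff)
  moreover have "(norm x)\<^sup>2 \<le> 1" "(norm z)\<^sup>2 \<le> 1"
    using x z by (simp_all add: power_le_one)
  ultimately show ?thesis by (simp add: power2_eq_square algebra_simps)
qed

lemma near_maximisers_Cauchy:
  fixes f :: "'h \<Rightarrow> real"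
  assumes f: "bounded_linear f" and bound: "\<And>y. f y \<le> M * norm y" and "0 < M"
    and X: "\<And>n. norm (X n) \<le> 1" "\<And>n. M - M * e n \<le> f (X n)" and e: "e \<longlonglongrightarrow> 0"
  shows "Cauchy X"
proof (rule CauchyI)
  fix r :: real assume "0 < r"
  then obtain N where N: "\<And>n. N \<le> n \<Longrightarrow> e n < r\<^sup>2 / 8"
    using order_tendstoD(2)[OF e, of "r\<^sup>2 / 8"] by (auto simp: eventually_sequentially)
  have "norm (X m - X n) < r" if "N \<le> m" "N \<le> n" for m n
  proof -
    have "(norm (X m - X n))\<^sup>2 \<le> 4 * (e m + e n)"
      by (rule near_maximisers_close[OF f bound \<open>0 < M\<close> X X])
    also have "\<dots> < r\<^sup>2" using N[OF that(1)] N[OF that(2)] by simp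
    finally show ?thesis
      by (rule power_less_imp_less_base) (use \<open>0 < r\<close> in simp)
  qed
  then show "\<exists>N. \<forall>m\<ge>N. \<forall>n\<ge>N. norm (X m - X n) < r" by blast
qed

lemma bounded_linear_real_attains_onorm:
  fixes f :: "'h \<Rightarrow> real"
  assumes f: "bounded_linear f" and "\<exists>x. f x \<noteq> 0"
  obtains u where "norm u = 1" "f u = onorm f"
proof -
  define M where "M = onorm f"
  have "0 < M" using onorm_pos_lt[OF f] assms(2) by (simp add: M_def)
  have bound: "f y \<le> M * norm y" for y
    using onorm[OF f, of y] by (simp add: M_def)
  define e where "e n = inverse (real (Suc n)) / 2" for n
  have "e \<longlonglongrightarrow> 0"
    unfolding e_def using tendsto_divide_zero[OF LIMSEQ_inverse_real_of_nat] .
  have "\<exists>x. norm x = 1 \<and> M - M * e n < f x" for n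
  proof -
    have "0 < e n" "e n < 1"
      unfolding e_def using le_imp_inverse_le[of 1 "real (Suc n)"] by auto
    then have "0 < M * e n" "M * e n < M" using \<open>0 < M\<close> by simp_all
    then show ?thesis
      by (metis M_def bounded_linear_real_near_onorm[OF f])
  qed
  then obtain X where X: "\<And>n. norm (X n) = 1" "\<And>n. M - M * e n < f (X n)" by metis
  have "Cauchy X"
    using X \<open>e \<longlonglongrightarrow> 0\<close> by (intro near_maximisers_Cauchy[OF f bound \<open>0 < M\<close>]) (auto intro: less_imp_le)
  then obtain u where u: "X \<longlonglongrightarrow> u"
    using Cauchy_convergent_iff convergent_def by blast
  have "norm u = 1"
    using tendsto_norm[OF u] by (simp add: X(1) LIMSEQ_const_iff)
  have "(\<lambda>n. M - M * e n) \<longlonglongrightarrow> M - M * 0"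
    using \<open>e \<longlonglongrightarrow> 0\<close> by (intro tendsto_intros)
  then have "M - M * 0 \<le> f u"
    using bounded_linear.tendsto[OF f u] by (rule LIMSEQ_le) (auto intro: less_imp_le X(2))
  moreover have "f u \<le> M" using bound[of u] \<open>norm u = 1\<close> by simp
  ultimately show thesis using that \<open>norm u = 1\<close> by (simp add: M_def)
qed

lemma bounded_linear_real_at_maximiser:
  fixes f :: "'h \<Rightarrow> real"
  assumes f: "bounded_linear f" and bound: "\<And>y. f y \<le> M * norm y"
    and u: "norm u = 1" "f u = M"
  shows "f v = M * Re (ip u v)"
proof -
  interpret f: bounded_linear f by (fact f)
  have "0 \<le> M" using bound[of "- u"] u by (simp add: f.neg)
  have "t * (f v - M * Re (ip u v)) \<le> t\<^sup>2 * (M * (norm v)\<^sup>2 / 2)" for t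
  proof -
    define s where "s = norm (u + t *\<^sub>R v)"
    have s2: "s\<^sup>2 = 1 + 2 * t * Re (ip u v) + t\<^sup>2 * (norm v)\<^sup>2"
      using u by (simp add: s_def power2_norm_add ip_scaleR_right power_mult_distrib)
    have "M + t * f v = f (u + t *\<^sub>R v)" using u by (simp add: f.add f.scale)
    also have "\<dots> \<le> M * s" unfolding s_def by (rule bound)
    also have "\<dots> \<le> M * ((1 + s\<^sup>2) / 2)"
      using \<open>0 \<le> M\<close> sum_squares_bound[of 1 s] by (intro mult_left_mono) simp_all
    finally show ?thesis unfolding s2 by (simp add: field_simps power2_eq_square)
  qed
  then have "f v - M * Re (ip u v) = 0" by (rule linear_le_quadratic_imp_eq_0)
  then show ?thesis by simp
qed

lemma riesz_representation_real:
  fixes f :: "'h \<Rightarrow> real"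
  assumes f: "bounded_linear f"
  obtains u where "\<And>x. f x = Re (ip u x)"
proof (cases "\<forall>x. f x = 0")
  case True
  then show thesis using that[of 0] by (simp add: ip_zero_left)
next
  case False
  then obtain u where "norm u = 1" "f u = onorm f"
    using bounded_linear_real_attains_onorm[OF f] by blast
  moreover have "f y \<le> onorm f * norm y" for y
    using onorm[OF f, of y] by simp
  ultimately have "f x = Re (ip (onorm f *\<^sub>R u) x)" for x
    using bounded_linear_real_at_maximiser[OF f] by (simp add: ip_scaleR_left)
  then show thesis by (rule that)
qed

lemma adjoint_exists:
  assumes T: "bounded_op sc T"
  shows "\<exists>u. \<forall>x. ip (T x) y = ip x u"
proof -
  interpret T: bounded_linear T using T by (simp add: bounded_op_def)
  have T_sc: "T (sc a x) = sc a (T x)" for a x using T by (simp add: bounded_op_def)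
  obtain K where K: "\<And>x. norm (T x) \<le> norm x * K" using T.bounded by blast
  define f where "f x = Re (ip y (T x))" for x
  have "bounded_linear f"
  proof (rule bounded_linear_intro)
    show "f (x + z) = f x + f z" for x z by (simp add: f_def T.add ip_add_right)
    show "f (r *\<^sub>R x) = r *\<^sub>R f x" for r x by (simp add: f_def T.scale ip_scaleR_right)
    show "norm (f x) \<le> norm x * (norm y * K)" for x
    proof -
      have "norm (f x) \<le> norm y * norm (T x)" using abs_Re_ip_le[of y "T x"] by (simp add: f_def)
      also have "\<dots> \<le> norm y * (norm x * K)" using K[of x] by (intro mult_left_mono) auto
      finally show ?thesis by (simp add: mult_ac)
    qed
  qed
  then obtain u where u: "\<And>x. f x = Re (ip u x)" using riesz_representation_real by blast
  have "ip y (T x) = ip u x" for x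
  proof (rule complex_eqI)
    show "Re (ip y (T x)) = Re (ip u x)" using u[of x] by (simp add: f_def)
    show "Im (ip y (T x)) = Im (ip u x)"
      using u[of "sc \<i> x"] by (simp add: f_def T_sc ip_sc_right)
  qed
  then have "ip (T x) y = ip x u" for x
    by (simp add: ip_commute_cnj[of "T x" y] ip_commute_cnj[of x u])
  then show ?thesis by blast
qed

lemma ip_adj:
  assumes T: "bounded_op sc T"
  shows "ip (T x) y = ip x (adj ip T y)"
proof -
  obtain S where S: "\<And>x y. ip (T x) y = ip x (S y)"
    using adjoint_exists[OF T] by metis
  have "adj ip T = S" unfolding adj_def
  proof (rule the_equality)
    fix S' assume "\<forall>x y. ip (T x) y = ip x (S' y)"
    then show "S' = S" by (metis S ip_right_cancel ext)
  qed (use S in blast)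
  then show ?thesis using S by simp
qed

lemma adj_add: "bounded_op sc T \<Longrightarrow> adj ip T (y + z) = adj ip T y + adj ip T z"
  by (rule ip_right_cancel) (simp add: ip_adj[symmetric] ip_add_right)

lemma adj_sc: "bounded_op sc T \<Longrightarrow> adj ip T (sc a y) = sc a (adj ip T y)"
  by (rule ip_right_cancel) (simp add: ip_adj[symmetric] ip_sc_right)

lemma linear_adj: "bounded_op sc T \<Longrightarrow> linear (adj ip T)"
  by (rule linearI) (simp_all add: adj_add adj_sc sc_of_real[symmetric])

end

text \<open>\<open>V i k\<close> stands for \<open>U\<^sub>i\<^sub>k\<^sup>*\<close>; only the diagonal cases \<open>k = l\<close> of (R2) and (R3) are used.\<close>

locale theta_relations =
  fixes sc :: "complex \<Rightarrow> 'h::real_vector \<Rightarrow> 'h" and n :: nat and \<theta> :: "nat \<Rightarrow> nat \<Rightarrow> real"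
    and U V :: "nat \<Rightarrow> nat \<Rightarrow> 'h \<Rightarrow> 'h"
  assumes sc_one: "sc 1 x = x"
    and linear_sc: "linear (sc a)"
    and theta_skew: "\<lbrakk>i \<in> {1..n}; j \<in> {1..n}\<rbrakk> \<Longrightarrow> \<theta> j i = - \<theta> i j"
    and linear_U: "\<lbrakk>i \<in> {1..n}; k \<in> {1..n}\<rbrakk> \<Longrightarrow> linear (U i k)"
    and linear_V: "\<lbrakk>i \<in> {1..n}; k \<in> {1..n}\<rbrakk> \<Longrightarrow> linear (V i k)"
    and V_sc: "\<lbrakk>i \<in> {1..n}; k \<in> {1..n}\<rbrakk> \<Longrightarrow> V i k (sc a x) = sc a (V i k x)"
    and twisted: "\<lbrakk>i \<in> {1..n}; j \<in> {1..n}; k \<in> {1..n}; l \<in> {1..n}\<rbrakk> \<Longrightarrow>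
      U i k (U j l x) + sc (omega \<theta> j i) (U j k (U i l x))
      = sc (omega \<theta> k l) (U i l (U j k x)) + sc (omega \<theta> j i * omega \<theta> k l) (U j l (U i k x))"
    and column_UV: "k \<in> {1..n} \<Longrightarrow> (\<Sum>m=1..n. U m k (V m k x)) = x"
    and column_VU: "k \<in> {1..n} \<Longrightarrow> (\<Sum>m=1..n. V m k (U m k x)) = x"
    and U_V_orthogonal: "\<lbrakk>i \<in> {1..n}; j \<in> {1..n}; k \<in> {1..n}; i \<noteq> j\<rbrakk> \<Longrightarrow> U j k (V i k x) = 0"
    and V_U_orthogonal: "\<lbrakk>i \<in> {1..n}; j \<in> {1..n}; k \<in> {1..n}; i \<noteq> j\<rbrakk> \<Longrightarrow> V i k (U j k x) = 0"
begin

lemma sc_zero: "sc a 0 = 0"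
  using linear_0[OF linear_sc] .

lemma U_zero: "\<lbrakk>i \<in> {1..n}; k \<in> {1..n}\<rbrakk> \<Longrightarrow> U i k 0 = 0"
  using linear_0[OF linear_U] .

lemma omega_diag: "i \<in> {1..n} \<Longrightarrow> omega \<theta> i i = 1"
  using theta_skew[of i i] by (simp add: omega_def)

lemma U_same_row_commute:
  assumes "i \<in> {1..n}" "k \<in> {1..n}" "l \<in> {1..n}"
  shows "U i k (U i l x) = sc (omega \<theta> k l) (U i l (U i k x))"
proof -
  have "U i k (U i l x) + U i k (U i l x)
      = sc (omega \<theta> k l) (U i l (U i k x)) + sc (omega \<theta> k l) (U i l (U i k x))"
    using twisted[OF assms(1,1,2,3), of x] assms(1) by (simp add: omega_diag sc_one)
  then show ?thesis
    by (metis scaleR_2 scaleR_cancel_left zero_neq_numeral)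
qed

lemma twisted_on_kernel:
  assumes "j \<in> {1..n}" "m \<in> {1..n}" "k \<in> {1..n}" "l \<in> {1..n}" and "U j k z = 0"
  shows "U j l (U m k z)
    = sc (omega \<theta> l k) (U j k (U m l z)) + sc (omega \<theta> m j * omega \<theta> l k) (U m k (U j l z))"
  using twisted[OF assms(1,2,4,3), of z] assms by (simp add: U_zero sc_zero)

lemma twisted_on_common_kernel:
  assumes "j \<in> {1..n}" "m \<in> {1..n}" "k \<in> {1..n}" "l \<in> {1..n}"
    and "U j k z = 0" "U m k z = 0"
  shows "U m k (U j l z) = - sc (omega \<theta> j m) (U j k (U m l z))"
  using twisted[OF assms(2,1,3,4), of z] assms by (simp add: U_zero sc_zero eq_neg_iff_add_eq_0)

lemma V_U_U_V_expand:
  assumes i: "i \<in> {1..n}" and j: "j \<in> {1..n}" and k: "k \<in> {1..n}" and l: "l \<in> {1..n}"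
    and m: "m \<in> {1..n}" and "i \<noteq> j"
  shows "V i k (U j l (U m k (V m k x)))
    = (if m = i then sc (omega \<theta> i j * omega \<theta> l k) (V i k (U i k (U j l (V i k x)))) else 0)"
proof (cases "m = j")
  case True
  then have "U j l (U m k (V m k x)) = sc (omega \<theta> l k) (U j k (U j l (V m k x)))"
    using U_same_row_commute[OF j l k] by simp
  then show ?thesis
    using True \<open>i \<noteq> j\<close> V_U_orthogonal[OF i j k \<open>i \<noteq> j\<close>] by (simp add: V_sc[OF i k] sc_zero)
next
  case False
  then have "U j k (V m k x) = 0" by (simp add: U_V_orthogonal[OF m j k])
  from twisted_on_kernel[OF j m k l this] show ?thesis
    using V_U_orthogonal[OF i j k \<open>i \<noteq> j\<close>] V_U_orthogonal[OF i m k]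
    by (simp add: linear_add[OF linear_V[OF i k]] V_sc[OF i k] sc_zero)
qed

lemma V_U_U_V_collapse:
  assumes i: "i \<in> {1..n}" and j: "j \<in> {1..n}" and k: "k \<in> {1..n}" and l: "l \<in> {1..n}"
    and m: "m \<in> {1..n}" and "i \<noteq> j"
  shows "V m k (U m k (U j l (V i k x)))
    = (if m = i then V i k (U i k (U j l (V i k x))) else 0)"
proof (cases "m = i")
  case False
  define y where "y = V i k x"
  have "U j k y = 0" "U m k y = 0"
    using U_V_orthogonal[OF i j k \<open>i \<noteq> j\<close>] U_V_orthogonal[OF i m k] False by (simp_all add: y_def)
  show ?thesis
  proof (cases "m = j")
    case True
    then have "U m k (U j l y) = 0"
      using U_same_row_commute[OF j k l] \<open>U j k y = 0\<close> by (simp add: U_zero[OF j l] sc_zero)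
    then show ?thesis
      using False by (simp add: y_def linear_0[OF linear_V[OF m k]])
  next
    case False
    from twisted_on_common_kernel[OF j m k l \<open>U j k y = 0\<close> \<open>U m k y = 0\<close>] show ?thesis
      using False \<open>m \<noteq> i\<close>
      by (simp add: y_def linear_neg[OF linear_V[OF m k]] V_sc[OF m k] V_U_orthogonal[OF m j k] sc_zero)
  qed
qed simp

theorem V_U_twisted_commute:
  assumes i: "i \<in> {1..n}" and j: "j \<in> {1..n}" and k: "k \<in> {1..n}" and l: "l \<in> {1..n}"
    and "i \<noteq> j"
  shows "V i k (U j l x) = sc (omega \<theta> i j * omega \<theta> l k) (U j l (V i k x))"
proof -
  define P where "P = V i k (U i k (U j l (V i k x)))"
  have "V i k (U j l x) = (\<Sum>m=1..n. V i k (U j l (U m k (V m k x))))"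
    using column_UV[OF k, of x]
    by (metis linear_sum[OF linear_U[OF j l]] linear_sum[OF linear_V[OF i k]])
  also have "\<dots> = (\<Sum>m=1..n. if m = i then sc (omega \<theta> i j * omega \<theta> l k) P else 0)"
    unfolding P_def by (intro sum.cong refl V_U_U_V_expand[OF i j k l _ \<open>i \<noteq> j\<close>]) simp
  also have "\<dots> = sc (omega \<theta> i j * omega \<theta> l k) P"
    using i by simp
  also have "P = U j l (V i k x)"
  proof -
    have "U j l (V i k x) = (\<Sum>m=1..n. V m k (U m k (U j l (V i k x))))"
      using column_VU[OF k] by simp
    also have "\<dots> = (\<Sum>m=1..n. if m = i then P else 0)"
      unfolding P_def by (intro sum.cong refl V_U_U_V_collapse[OF i j k l _ \<open>i \<noteq> j\<close>]) simp
    finally show ?thesis using i by simp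
  qed
  finally show ?thesis .
qed

end

theorem proposition3p17:
  fixes sc :: "complex \<Rightarrow> 'h::banach \<Rightarrow> 'h" and ip :: "'h \<Rightarrow> 'h \<Rightarrow> complex"
    and n :: nat and \<theta> :: "nat \<Rightarrow> nat \<Rightarrow> real" and U :: "nat \<Rightarrow> nat \<Rightarrow> 'h \<Rightarrow> 'h"
  assumes H: "complex_hilbert sc ip"
    and n: "n \<ge> 2"
    and skew: "\<forall>i\<in>{1..n}. \<forall>j\<in>{1..n}. \<theta> j i = - \<theta> i j"
    and bdd: "\<forall>i\<in>{1..n}. \<forall>k\<in>{1..n}. bounded_op sc (U i k)"
    and R1: "\<forall>i\<in>{1..n}. \<forall>j\<in>{1..n}. \<forall>k\<in>{1..n}. \<forall>l\<in>{1..n}. \<forall>x.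
               U i k (U j l x) + sc (omega \<theta> j i) (U j k (U i l x))
             = sc (omega \<theta> k l) (U i l (U j k x))
               + sc (omega \<theta> j i * omega \<theta> k l) (U j l (U i k x))"
    and R2: "\<forall>k\<in>{1..n}. \<forall>l\<in>{1..n}. \<forall>x.
               (\<Sum>i=1..n. U i k (adj ip (U i l) x)) = (if k = l then x else 0)"
    and R3: "\<forall>k\<in>{1..n}. \<forall>l\<in>{1..n}. \<forall>x.
               (\<Sum>i=1..n. adj ip (U i l) (U i k x)) = (if k = l then x else 0)"
    and R4: "\<forall>i\<in>{1..n}. \<forall>j\<in>{1..n}. \<forall>k\<in>{1..n}. i \<noteq> j \<longrightarrow>
               (\<forall>x. U j k (adj ip (U i k) x) = 0)"
    and R5: "\<forall>i\<in>{1..n}. \<forall>j\<in>{1..n}. \<forall>k\<in>{1..n}. i \<noteq> j \<longrightarrow>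
               (\<forall>x. adj ip (U i k) (U j k x) = 0)"
  shows "\<forall>i\<in>{1..n}. \<forall>j\<in>{1..n}. \<forall>k\<in>{1..n}. \<forall>l\<in>{1..n}. i \<noteq> j \<longrightarrow> k \<noteq> l \<longrightarrow>
           (\<forall>x. adj ip (U i k) (U j l x)
                = sc (omega \<theta> i j * omega \<theta> l k) (U j l (adj ip (U i k) x)))"
proof -
  interpret hilbert_space sc ip by (fact hilbert_space.intro[OF H])
  have U: "bounded_op sc (U i k)" if "i \<in> {1..n}" "k \<in> {1..n}" for i k
    using bdd that by blast
  have "theta_relations sc n \<theta> U (\<lambda>i k. adj ip (U i k))"
  proof (rule theta_relations.intro)
    fix i j k l :: nat and a x
    assume "i \<in> {1..n}" "j \<in> {1..n}" "k \<in> {1..n}" "l \<in> {1..n}"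
    show "\<theta> j i = - \<theta> i j"
      using skew \<open>i \<in> {1..n}\<close> \<open>j \<in> {1..n}\<close> by blast
    show "linear (U i k)"
      using U[OF \<open>i \<in> {1..n}\<close> \<open>k \<in> {1..n}\<close>] by (simp add: bounded_op_def bounded_linear.linear)
    show "linear (adj ip (U i k))" "adj ip (U i k) (sc a x) = sc a (adj ip (U i k) x)"
      using U[OF \<open>i \<in> {1..n}\<close> \<open>k \<in> {1..n}\<close>] by (simp_all add: linear_adj adj_sc)
    show "U i k (U j l x) + sc (omega \<theta> j i) (U j k (U i l x))
      = sc (omega \<theta> k l) (U i l (U j k x)) + sc (omega \<theta> j i * omega \<theta> k l) (U j l (U i k x))"
      using R1 \<open>i \<in> {1..n}\<close> \<open>j \<in> {1..n}\<close> \<open>k \<in> {1..n}\<close> \<open>l \<in> {1..n}\<close> by blast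
    show "(\<Sum>m=1..n. U m k (adj ip (U m k) x)) = x" "(\<Sum>m=1..n. adj ip (U m k) (U m k x)) = x"
      using R2 R3 \<open>k \<in> {1..n}\<close> by simp_all
    show "i \<noteq> j \<Longrightarrow> U j k (adj ip (U i k) x) = 0" "i \<noteq> j \<Longrightarrow> adj ip (U i k) (U j k x) = 0"
      using R4 R5 \<open>i \<in> {1..n}\<close> \<open>j \<in> {1..n}\<close> \<open>k \<in> {1..n}\<close> by blast+
  qed (simp_all add: sc_one linear_sc)
  then show ?thesis
    using theta_relations.V_U_twisted_commute by blast
qed

end
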